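(* Let $A:\mathbb{R}^n\to\mathbb{R}^{n\times n}$ be symmetric-matrix valued, three times continuously differentiable at every $v\neq 0$, with $A(\alpha v)=A(v)$ for all $\alpha\in\mathbb{R}\setminus\{0\}$; let $J(v):=\frac{\partial}{\partial v}(A(v)v)$ and $p(y):=\frac{y^TA(y)y}{y^Ty}$. Fix $\sigma\in\mathbb{R}$ and a vector $v_0=y_0$. Let (a) $v_{k+1}=(J(v_k)-\sigma I)^{-1}v_k/\|(J(v_k)-\sigma I)^{-1}v_k\|_2$ (inverse iteration with shift $\sigma$), and (b) $y_{k+1}=\alpha_k\big((\tfrac{1}{h_k}-p(y_k))I+J(y_k)\big)^{-1}y_k$ with $\alpha_k=1/\big\|\big((\tfrac{1}{h_k}-p(y_k))I+J(y_k)\big)^{-1}y_k\big\|_2$ and step length $h_k=\frac{1}{p(y_k)-\sigma}$ (the Rosenbrock–Euler discretization, followed by normalization, of the ODE $y'=p(y)y-A(y)y$). Assume all quantities are well defined (i.e., $p(y_k)\neq\sigma$ and the involved matrices are nonsingular). Then $v_k=y_k$ for all $k\in\mathbb{N}$.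
   Context: The scheme in (b) is what the paper obtains by applying a linearized backward Euler step (Rosenbrock–Euler) to the ODE $y'(t)=p(y(t))y(t)-A(y(t))y(t)$ and projecting the result onto the unit sphere by normalization. *)

theory Defs
  imports "HOL-Analysis.Analysis"
begin

definition C3_on :: "'a::real_normed_vector set \<Rightarrow> ('a \<Rightarrow> 'b::real_normed_vector) \<Rightarrow> bool" where
  "C3_on S f \<longleftrightarrow> (\<exists>f1 f2 f3.
      (\<forall>x\<in>S. (f has_derivative blinfun_apply (f1 x)) (at x)) \<and>
      (\<forall>x\<in>S. (f1 has_derivative blinfun_apply (f2 x)) (at x)) \<and>
      (\<forall>x\<in>S. (f2 has_derivative blinfun_apply (f3 x)) (at x)) \<and>
      continuous_on S f3)"

definition Jmat :: "(real^'n \<Rightarrow> real^'n^'n) \<Rightarrow> real^'n \<Rightarrow> real^'n^'n" where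
  "Jmat A v = jacobian (\<lambda>w. A w *v w) (at v)"

definition pq :: "(real^'n \<Rightarrow> real^'n^'n) \<Rightarrow> real^'n \<Rightarrow> real" where
  "pq A y = (y \<bullet> (A y *v y)) / (y \<bullet> y)"

end

theory Submission
  imports Defs
begin

text \<open>With the step length \<open>h = 1/(p - \<sigma>)\<close> the Rosenbrock shift \<open>1/h - p\<close> collapses to \<open>-\<sigma>\<close>,
  so one Rosenbrock--Euler step followed by normalization applies exactly the same map
  \<open>w \<mapsto> (J(w) - \<sigma> I)\<^sup>-\<^sup>1 w / \<parallel>(J(w) - \<sigma> I)\<^sup>-\<^sup>1 w\<parallel>\<close> as one step of shifted inverse
  iteration; the two sequences agree by induction.\<close>

lemma Rosenbrock_shift_eq:
  fixes J :: "real^'n^'n"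
  shows "(1 / (1 / (p - \<sigma>)) - p) *\<^sub>R mat 1 + J = J - \<sigma> *\<^sub>R mat 1"
  by (simp add: algebra_simps)

lemma scaleR_divide_norm: "x /\<^sub>R norm x = (1 / norm x) *\<^sub>R x"
  by (simp add: divide_inverse_commute)

theorem theorem6:
  fixes A :: "real^'n \<Rightarrow> real^'n^'n"
    and \<sigma> :: real
    and v y :: "nat \<Rightarrow> real^'n"
    and h \<alpha> :: "nat \<Rightarrow> real"
  assumes sym: "\<And>w. transpose (A w) = A w"
    and smooth: "C3_on (- {0}) A"
    and homog: "\<And>w a. a \<noteq> 0 \<Longrightarrow> A (a *\<^sub>R w) = A w"
    and init: "v 0 = y 0"
    and y0_nz: "y 0 \<noteq> 0"
    and v_rec: "\<And>k. v (Suc k) =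
        (matrix_inv (Jmat A (v k) - \<sigma> *\<^sub>R mat 1) *v v k) /\<^sub>R
          norm (matrix_inv (Jmat A (v k) - \<sigma> *\<^sub>R mat 1) *v v k)"
    and h_def: "\<And>k. h k = 1 / (pq A (y k) - \<sigma>)"
    and \<alpha>_def: "\<And>k. \<alpha> k = 1 / norm (matrix_inv ((1 / h k - pq A (y k)) *\<^sub>R mat 1 + Jmat A (y k)) *v y k)"
    and y_rec: "\<And>k. y (Suc k) =
        \<alpha> k *\<^sub>R (matrix_inv ((1 / h k - pq A (y k)) *\<^sub>R mat 1 + Jmat A (y k)) *v y k)"
    and wd_p: "\<And>k. pq A (y k) \<noteq> \<sigma>"
    and wd_v: "\<And>k. invertible (Jmat A (v k) - \<sigma> *\<^sub>R mat 1)"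
    and wd_y: "\<And>k. invertible ((1 / h k - pq A (y k)) *\<^sub>R mat 1 + Jmat A (y k))"
  shows "\<forall>k. v k = y k"
proof
  fix k show "v k = y k"
  proof (induction k)
    case 0
    show ?case using init .
  next
    case (Suc k)
    have shift: "(1 / h k - pq A (y k)) *\<^sub>R mat 1 + Jmat A (y k) = Jmat A (y k) - \<sigma> *\<^sub>R mat 1"
      unfolding h_def by (rule Rosenbrock_shift_eq)
    show ?case
      unfolding v_rec y_rec \<alpha>_def shift Suc.IH by (rule scaleR_divide_norm)
  qed
qed

end
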